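(* Let $M=(S,\mathrm{Act},P)$ be an MDP, $T\subseteq S$, $\mathrm{opt}\in\{\min,\max\}$, and let $r_1,r_2\in\mathbb{N}_\infty^S$ with $r_1\le r_2$ (pointwise). Then $\tilde D^{\mathrm{opt}}(r_1)\le\tilde D^{\mathrm{opt}}(r_2)$.
   Context: An MDP is a tuple $M=(S,\mathrm{Act},P)$ with $S$ finite, $\mathrm{Act}$ finite, $P\colon S\times\mathrm{Act}\times S\to[0,1]$ with $\sum_{s'}P(s,a,s')\in\{0,1\}$; $\mathrm{Act}(s)=\{a\mid\sum_{s'}P(s,a,s')=1\}$ is nonempty for all $s$; $\mathrm{Post}(s,a)=\{s'\mid P(s,a,s')>0\}$. $\mathbb{N}_\infty=\mathbb{N}\cup\{\infty\}$ with $\infty+1=\infty$. The complementary distance operator $\tilde D^{\mathrm{opt}}\colon\mathbb{N}_\infty^S\to\mathbb{N}_\infty^S$ is $\tilde D^{\mathrm{opt}}(r)(s)=\infty$ for $s\in T$ and $\mathrm{opt}_{a\in\mathrm{Act}(s)}\big(\min_{s'\in\mathrm{Post}(s,a)}r(s')+[\exists u,v\in\mathrm{Post}(s,a)\colon r(u)\ne r(v)]\big)$ for $s\notin T$, where $[\varphi]$ is $1$ if $\varphi$ holds and $0$ otherwise. *)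

theory Defs
  imports Main "HOL-Library.Extended_Nat"
begin

definition is_mdp :: "('s \<Rightarrow> 'a \<Rightarrow> 's \<Rightarrow> real) \<Rightarrow> bool" where
  "is_mdp P \<longleftrightarrow> finite (UNIV :: 's set) \<and> finite (UNIV :: 'a set)
     \<and> (\<forall>s a s'. 0 \<le> P s a s' \<and> P s a s' \<le> 1)
     \<and> (\<forall>s a. (\<Sum>s'\<in>UNIV. P s a s') \<in> {0, 1})
     \<and> (\<forall>s. \<exists>a. (\<Sum>s'\<in>UNIV. P s a s') = 1)"

definition Act :: "('s \<Rightarrow> 'a \<Rightarrow> 's \<Rightarrow> real) \<Rightarrow> 's \<Rightarrow> 'a set" where
  "Act P s = {a. (\<Sum>s'\<in>UNIV. P s a s') = 1}"

definition Post :: "('s \<Rightarrow> 'a \<Rightarrow> 's \<Rightarrow> real) \<Rightarrow> 's \<Rightarrow> 'a \<Rightarrow> 's set" where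
  "Post P s a = {s'. P s a s' > 0}"

datatype opt = OMin | OMax

definition opt_over :: "opt \<Rightarrow> enat set \<Rightarrow> enat" where
  "opt_over o' A = (case o' of OMin \<Rightarrow> Min A | OMax \<Rightarrow> Max A)"

definition Dtilde :: "('s \<Rightarrow> 'a \<Rightarrow> 's \<Rightarrow> real) \<Rightarrow> 's set \<Rightarrow> opt
    \<Rightarrow> ('s \<Rightarrow> enat) \<Rightarrow> ('s \<Rightarrow> enat)" where
  "Dtilde P T o' r s =
     (if s \<in> T then \<infinity>
      else opt_over o' ((\<lambda>a. Min (r ` Post P s a)
              + (if \<exists>u\<in>Post P s a. \<exists>v\<in>Post P s a. r u \<noteq> r v then 1 else 0))
            ` Act P s))"

end

theory Submission
  imports Defs
begin

text \<open>The only non-trivial point is the indicator term of the operator. For the successor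
  set A of one action, Min (r ` A) + [r is not constant on A] is monotone in r: if r2 is
  constant on A with value c while r1 is not, then Min (r1 ` A) < r1 v \<le> r2 v = c for some v,
  so Min (r1 ` A) + 1 \<le> c in enat. Monotonicity of Min and Max over the enabled actions
  does the rest.\<close>

definition step_value :: "('s \<Rightarrow> enat) \<Rightarrow> 's set \<Rightarrow> enat" where
  "step_value r A = Min (r ` A) + (if \<exists>u\<in>A. \<exists>v\<in>A. r u \<noteq> r v then 1 else 0)"

lemma Dtilde_eq_step_value:
  "Dtilde P T o' r s =
     (if s \<in> T then \<infinity> else opt_over o' ((\<lambda>a. step_value r (Post P s a)) ` Act P s))"
  unfolding Dtilde_def step_value_def ..

lemma Min_image_mono:
  fixes f g :: "'b \<Rightarrow> 'c::linorder"
  assumes "finite A" "A \<noteq> {}" "\<And>x. x \<in> A \<Longrightarrow> f x \<le> g x"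
  shows "Min (f ` A) \<le> Min (g ` A)"
  using assms by (auto intro!: Min.boundedI intro: order_trans[OF Min_le])

lemma Max_image_mono:
  fixes f g :: "'b \<Rightarrow> 'c::linorder"
  assumes "finite A" "A \<noteq> {}" "\<And>x. x \<in> A \<Longrightarrow> f x \<le> g x"
  shows "Max (f ` A) \<le> Max (g ` A)"
  using assms by (auto intro!: Max.boundedI intro: order_trans[OF _ Max_ge])

lemma opt_over_image_mono:
  fixes f g :: "'b \<Rightarrow> enat"
  assumes "finite A" "A \<noteq> {}" "\<And>x. x \<in> A \<Longrightarrow> f x \<le> g x"
  shows "opt_over o' (f ` A) \<le> opt_over o' (g ` A)"
  using Min_image_mono[OF assms] Max_image_mono[OF assms]
  unfolding opt_over_def by (cases o') simp_all

lemma Min_image_less_if_not_constant: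
  fixes f :: "'b \<Rightarrow> 'c::linorder"
  assumes "finite A" "u \<in> A" "v \<in> A" "f u \<noteq> f v"
  obtains x where "x \<in> A" "Min (f ` A) < f x"
proof -
  have "Min (f ` A) \<le> f u" "Min (f ` A) \<le> f v"
    using assms(1-3) by simp_all
  with assms(2-4) that show thesis
    by (metis order.not_eq_order_implies_strict)
qed

lemma step_value_mono:
  assumes fin: "finite A" and ne: "A \<noteq> {}" and le: "\<And>x. x \<in> A \<Longrightarrow> r1 x \<le> r2 x"
  shows "step_value r1 A \<le> step_value r2 A"
proof -
  have Min_le: "Min (r1 ` A) \<le> Min (r2 ` A)"
    using Min_image_mono[OF fin ne le] .
  consider (r2_varies) "\<exists>u\<in>A. \<exists>v\<in>A. r2 u \<noteq> r2 v"
    | (both_const) "\<not> (\<exists>u\<in>A. \<exists>v\<in>A. r1 u \<noteq> r1 v)"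
        "\<not> (\<exists>u\<in>A. \<exists>v\<in>A. r2 u \<noteq> r2 v)"
    | (r2_const_r1_varies) c u v where "\<And>x. x \<in> A \<Longrightarrow> r2 x = c"
        "u \<in> A" "v \<in> A" "r1 u \<noteq> r1 v"
    using ne by blast
  then show ?thesis
  proof cases
    case r2_varies
    have "step_value r1 A \<le> Min (r1 ` A) + 1"
      unfolding step_value_def by (simp add: add_left_mono)
    also have "\<dots> \<le> step_value r2 A"
      using r2_varies Min_le unfolding step_value_def by (simp add: add_right_mono)
    finally show ?thesis .
  next
    case both_const
    then show ?thesis
      using Min_le unfolding step_value_def by (simp only: if_False add_0_right)
  next
    case r2_const_r1_varies
    then have "r2 ` A = {c}"
      using ne by auto
    then have Min_r2: "Min (r2 ` A) = c"
      by simp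
    obtain x where x: "x \<in> A" "Min (r1 ` A) < r1 x"
      using Min_image_less_if_not_constant[OF fin r2_const_r1_varies(2-4)] .
    have "Min (r1 ` A) < c"
      using x le[OF x(1)] r2_const_r1_varies(1)[OF x(1)] by simp
    then have "Min (r1 ` A) + 1 \<le> c"
      by (metis ileI1 eSuc_plus_1)
    moreover have "\<exists>u\<in>A. \<exists>v\<in>A. r1 u \<noteq> r1 v"
      using r2_const_r1_varies(2-4) by blast
    moreover have "\<not> (\<exists>u\<in>A. \<exists>v\<in>A. r2 u \<noteq> r2 v)"
      using r2_const_r1_varies(1) by metis
    ultimately show ?thesis
      unfolding step_value_def Min_r2 by (simp only: if_True if_False add_0_right)
  qed
qed

lemma Post_nonempty:
  assumes "a \<in> Act P s"
  shows "Post P s a \<noteq> {}"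
proof
  assume "Post P s a = {}"
  then have "(\<Sum>s'\<in>UNIV. P s a s') \<le> 0"
    unfolding Post_def by (auto intro: sum_nonpos simp: not_less)
  with assms show False
    unfolding Act_def by simp
qed

lemma Act_nonempty:
  assumes "is_mdp P"
  shows "Act P s \<noteq> {}"
  using assms unfolding is_mdp_def Act_def by auto

theorem lemma8:
  fixes P :: "'s \<Rightarrow> 'a \<Rightarrow> 's \<Rightarrow> real" and T :: "'s set" and o' :: opt
    and r1 r2 :: "'s \<Rightarrow> enat"
  assumes "is_mdp P"
    and "\<forall>s. r1 s \<le> r2 s"
  shows "\<forall>s. Dtilde P T o' r1 s \<le> Dtilde P T o' r2 s"
proof
  fix s
  have finite_states: "finite (UNIV :: 's set)" and finite_actions: "finite (UNIV :: 'a set)"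
    using assms(1) unfolding is_mdp_def by blast+
  have "opt_over o' ((\<lambda>a. step_value r1 (Post P s a)) ` Act P s)
      \<le> opt_over o' ((\<lambda>a. step_value r2 (Post P s a)) ` Act P s)"
  proof (rule opt_over_image_mono)
    show "finite (Act P s)" "Act P s \<noteq> {}"
      using finite_actions Act_nonempty[OF assms(1)] by (auto intro: finite_subset)
    fix a assume "a \<in> Act P s"
    show "step_value r1 (Post P s a) \<le> step_value r2 (Post P s a)"
      using finite_states assms(2) Post_nonempty[OF \<open>a \<in> Act P s\<close>]
      by (intro step_value_mono) (auto intro: finite_subset)
  qed
  then show "Dtilde P T o' r1 s \<le> Dtilde P T o' r2 s"
    unfolding Dtilde_eq_step_value by simp
qed

end
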